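(* Let $p,q$ be positive integers with $1<q<p-q$ and $\gcd(p,q)=1$, $A=\langle q,p-q\rangle$, $s\in A\setminus\{0\}$, $r$ a positive integer with $1<r<s-r$ and $\gcd(r,s)=1$, $B=\langle r,s-r\rangle$. Let $M$ be the submonoid of $\mathbb{Q}^+$ generated by all $k/r$ ($k\in A$) and all $\frac{k'}{r}(s/r)^n$ ($k'\in B$, $n\ge1$), and $(G,G^+)=(M+(-M),M)$. Then $(G,G^+)$ is order-isomorphic to a direct limit $\varinjlim((\mathbb{Z},G_i^+),f_{i,i+1})$ where each $(\mathbb{Z},G_i^+)$ is a simple component and each $f_{i,i+1}\colon(\mathbb{Z},G_i^+)\to(\mathbb{Z},G_{i+1}^+)$ is an order-embedding given by multiplication by $r$.
   Context: $\langle a_1,\dots,a_k\rangle$ is the submonoid of $\mathbb{Z}^+$ generated by the $a_i$. A simple component is a simple partially ordered abelian group of the form $(\mathbb{Z},P)$ (simple: every nonzero positive element $u$ is an order-unit, i.e. for every $x$ there is $n$ with $-nu\le x\le nu$). An order-embedding is an injective homomorphism $f$ with $f(G^+)=f(G)\cap H^+$. The direct limit carries as positive cone the union of the images of the positive cones. *)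

theory Defs
  imports Complex_Main
begin

definition monoid2 :: "int \<Rightarrow> int \<Rightarrow> int set" where
  "monoid2 a b = {int m * a + int n * b | m n. True}"

inductive_set submonoid_gen :: "rat set \<Rightarrow> rat set" for S where
  zero: "0 \<in> submonoid_gen S"
| gen: "x \<in> S \<Longrightarrow> x \<in> submonoid_gen S"
| add: "x \<in> submonoid_gen S \<Longrightarrow> y \<in> submonoid_gen S \<Longrightarrow> x + y \<in> submonoid_gen S"

definition diff_group :: "rat set \<Rightarrow> rat set" where
  "diff_group M = {a - b | a b. a \<in> M \<and> b \<in> M}"

definition po_cone :: "int set \<Rightarrow> bool" where
  "po_cone P \<longleftrightarrow> 0 \<in> P \<and> (\<forall>x\<in>P. \<forall>y\<in>P. x + y \<in> P) \<and> (\<forall>x. x \<in> P \<and> -x \<in> P \<longrightarrow> x = 0)"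

definition order_unit :: "int set \<Rightarrow> int \<Rightarrow> bool" where
  "order_unit P u \<longleftrightarrow> (\<forall>x. \<exists>n::nat. x + int n * u \<in> P \<and> int n * u - x \<in> P)"

definition simple_component :: "int set \<Rightarrow> bool" where
  "simple_component P \<longleftrightarrow> po_cone P \<and> (\<forall>u\<in>P. u \<noteq> 0 \<longrightarrow> order_unit P u)"

definition order_embedding :: "(int \<Rightarrow> int) \<Rightarrow> int set \<Rightarrow> int set \<Rightarrow> bool" where
  "order_embedding f P Q \<longleftrightarrow> (\<forall>x y. f (x + y) = f x + f y) \<and> inj f \<and>
     f ` P = range f \<inter> Q"

fun fcomp :: "(nat \<Rightarrow> int \<Rightarrow> int) \<Rightarrow> nat \<Rightarrow> nat \<Rightarrow> int \<Rightarrow> int" where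
  "fcomp f i 0 x = x"
| "fcomp f i (Suc n) x = f (i + n) (fcomp f i n x)"

definition dl_rel :: "(nat \<Rightarrow> int \<Rightarrow> int) \<Rightarrow> ((nat \<times> int) \<times> (nat \<times> int)) set" where
  "dl_rel f = {((i,x),(j,y)). \<exists>k. i \<le> k \<and> j \<le> k \<and> fcomp f i (k - i) x = fcomp f j (k - j) y}"

definition dl_carrier :: "(nat \<Rightarrow> int \<Rightarrow> int) \<Rightarrow> (nat \<times> int) set set" where
  "dl_carrier f = UNIV // dl_rel f"

definition dl_add :: "(nat \<Rightarrow> int \<Rightarrow> int) \<Rightarrow> (nat \<times> int) set \<Rightarrow> (nat \<times> int) set \<Rightarrow> (nat \<times> int) set" where
  "dl_add f C D = (let (i,x) = (SOME a. a \<in> C); (j,y) = (SOME b. b \<in> D); k = max i j in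
      dl_rel f `` {(k, fcomp f i (k - i) x + fcomp f j (k - j) y)})"

definition dl_pos :: "(nat \<Rightarrow> int \<Rightarrow> int) \<Rightarrow> (nat \<Rightarrow> int set) \<Rightarrow> (nat \<times> int) set set" where
  "dl_pos f P = {C \<in> dl_carrier f. \<exists>i x. (i,x) \<in> C \<and> x \<in> P i}"

definition order_iso_dl :: "rat set \<Rightarrow> rat set \<Rightarrow> (nat \<Rightarrow> int \<Rightarrow> int) \<Rightarrow> (nat \<Rightarrow> int set) \<Rightarrow> bool" where
  "order_iso_dl G Gpos f P \<longleftrightarrow> (\<exists>\<phi>. bij_betw \<phi> G (dl_carrier f) \<and>
     (\<forall>a\<in>G. \<forall>b\<in>G. \<phi> (a + b) = dl_add f (\<phi> a) (\<phi> b)) \<and> \<phi> ` Gpos = dl_pos f P)"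

end

theory Submission
  imports Defs
begin

(* Stage i of the system is identified with (1/r^(i+1)) Z inside Z[1/r]; this turns the direct
   limit of multiplication by r into Z[1/r], with i-th cone the set of x such that x / r^(i+1)
   lies in M.  Coprimality of q and p - q puts 1/r into M - M, and coprimality of r and s turns
   (s/r)^n into 1/r^n, so M - M is all of Z[1/r].  Each cone is a submonoid of the nonnegative
   integers containing two coprime elements, hence all large integers, so every nonzero element
   of it is an order unit. *)

definition add_submonoid :: "'a::monoid_add set \<Rightarrow> bool" where
  "add_submonoid P \<longleftrightarrow> 0 \<in> P \<and> (\<forall>x\<in>P. \<forall>y\<in>P. x + y \<in> P)"

lemma add_submonoid_submonoid_gen: "add_submonoid (submonoid_gen S)"
  by (auto simp: add_submonoid_def intro: submonoid_gen.intros)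

lemma add_submonoid_mult_mem:
  fixes P :: "int set"
  assumes "add_submonoid P" "a \<in> P" "0 \<le> k"
  shows "k * a \<in> P"
proof -
  have "int n * a \<in> P" for n
    using assms(1,2) by (induction n) (auto simp: add_submonoid_def distrib_right)
  from this[of "nat k"] show ?thesis
    using assms(3) by simp
qed

subsection \<open>Numerical semigroups\<close>

lemma coprime_bounded_repr:
  fixes a b x :: int
  assumes "coprime a b" "0 < b"
  obtains m n where "x = m * a + n * b" "0 \<le> m" "m < b"
proof -
  obtain u v where uv: "u * a + v * b = 1"
    using bezout_int[of a b] assms(1) by (auto simp: coprime_iff_gcd_eq_1)
  define m where "m = (x * u) mod b"
  define n where "n = x * v + a * (x * u div b)"
  have "x = x * (u * a + v * b)"
    using uv by simp
  also have "\<dots> = (b * (x * u div b) + m) * a + x * v * b"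
    by (simp add: m_def algebra_simps)
  also have "\<dots> = m * a + n * b"
    by (simp add: n_def algebra_simps)
  finally show ?thesis
    using that assms(2) by (simp add: m_def)
qed

lemma add_submonoid_eventually_mem:
  fixes P :: "int set"
  assumes P: "add_submonoid P" and "a \<in> P" "0 < a" "0 < b" "coprime a b"
    and multiples: "\<And>k. N \<le> k \<Longrightarrow> k * b \<in> P"
  shows "\<exists>N'. \<forall>x \<ge> N'. x \<in> P"
proof (intro exI allI impI)
  fix x assume x: "N * b + b * a \<le> x"
  obtain m n where mn: "x = m * a + n * b" "0 \<le> m" "m < b"
    using coprime_bounded_repr[OF \<open>coprime a b\<close> \<open>0 < b\<close>] .
  have "m * a \<le> b * a"
    using mn(3) \<open>0 < a\<close> by simp
  then have "N * b \<le> n * b"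
    using x mn(1) by linarith
  then have "N \<le> n"
    using \<open>0 < b\<close> by simp
  then have "n * b \<in> P" "m * a \<in> P"
    using multiples add_submonoid_mult_mem[OF P \<open>a \<in> P\<close> mn(2)] by auto
  then show "x \<in> P"
    using P mn(1) by (simp add: add_submonoid_def)
qed

corollary add_submonoid_eventually_mem_coprime:
  fixes P :: "int set"
  assumes "add_submonoid P" "a \<in> P" "b \<in> P" "0 < a" "0 < b" "coprime a b"
  shows "\<exists>N. \<forall>x \<ge> N. x \<in> P"
  using add_submonoid_eventually_mem[of P a b 0] add_submonoid_mult_mem assms by blast

lemma simple_component_if_eventually_mem:
  fixes P :: "int set"
  assumes P: "add_submonoid P" and nonneg: "\<And>x. x \<in> P \<Longrightarrow> 0 \<le> x"
    and large: "\<And>x. N \<le> x \<Longrightarrow> x \<in> P"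
  shows "simple_component P"
  unfolding simple_component_def po_cone_def
proof (intro conjI ballI allI impI)
  show "0 \<in> P"
    using P by (simp add: add_submonoid_def)
  show "x + y \<in> P" if "x \<in> P" "y \<in> P" for x y
    using P that by (simp add: add_submonoid_def)
  show "x = 0" if "x \<in> P \<and> - x \<in> P" for x
    using nonneg[of x] nonneg[of "- x"] that by linarith
  fix u assume u: "u \<in> P" "u \<noteq> 0"
  then have "1 \<le> u"
    using nonneg by force
  show "order_unit P u"
    unfolding order_unit_def
  proof
    fix x
    define n where "n = nat (\<bar>x\<bar> + \<bar>N\<bar>)"
    have "int n \<le> int n * u"
      using \<open>1 \<le> u\<close> by (simp add: mult_le_cancel_left1)
    then have "N \<le> x + int n * u" "N \<le> int n * u - x"
      by (simp_all add: n_def)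
    then show "\<exists>n::nat. x + int n * u \<in> P \<and> int n * u - x \<in> P"
      using large by blast
  qed
qed

lemma subset_diff_group: "0 \<in> M \<Longrightarrow> M \<subseteq> diff_group M"
  by (force simp: diff_group_def)

lemma diff_group_add:
  assumes "add_submonoid M" "x \<in> diff_group M" "y \<in> diff_group M"
  shows "x + y \<in> diff_group M"
proof -
  obtain a b c d where "x = a - b" "y = c - d" "a \<in> M" "b \<in> M" "c \<in> M" "d \<in> M"
    using assms(2,3) by (auto simp: diff_group_def)
  then have "x + y = (a + c) - (b + d)" "a + c \<in> M" "b + d \<in> M"
    using assms(1) by (auto simp: add_submonoid_def)
  then show ?thesis
    by (auto simp: diff_group_def)
qed

lemma diff_group_uminus: "x \<in> diff_group M \<Longrightarrow> - x \<in> diff_group M"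
  by (force simp: diff_group_def)

lemma diff_group_of_int_mult:
  assumes M: "add_submonoid M" and x: "x \<in> diff_group M"
  shows "of_int k * x \<in> diff_group M"
proof -
  have multiple: "of_nat n * x \<in> diff_group M" for n
    using M subset_diff_group by (induction n) (auto simp: distrib_right diff_group_add x add_submonoid_def)
  show ?thesis
  proof (cases "0 \<le> k")
    case True
    then show ?thesis
      using multiple[of "nat k"] by simp
  next
    case False
    then show ?thesis
      using diff_group_uminus[OF multiple[of "nat (- k)"]] by simp
  qed
qed

lemma inverse_mem_diff_group:
  assumes M: "add_submonoid M" and "of_int a / c \<in> diff_group M" "of_int b / c \<in> diff_group M"
    and "coprime a b"
  shows "1 / c \<in> diff_group M"
proof -
  obtain u v where uv: "u * a + v * b = 1"
    using bezout_int[of a b] \<open>coprime a b\<close> by (auto simp: coprime_iff_gcd_eq_1)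
  have "of_int u * (of_int a / c) + of_int v * (of_int b / c) \<in> diff_group M"
    using assms by (intro diff_group_add diff_group_of_int_mult)
  also have "of_int u * (of_int a / c) + of_int v * (of_int b / c) = of_int (u * a + v * b) / c"
    by (simp add: add_divide_distrib)
  finally show ?thesis
    by (simp add: uv)
qed

subsection \<open>The direct limit of multiplication by \<open>r\<close>\<close>

definition stage_val :: "int \<Rightarrow> nat \<times> int \<Rightarrow> rat" where
  "stage_val r a = of_int (snd a) / of_int r ^ Suc (fst a)"

definition stage_cone :: "int \<Rightarrow> rat set \<Rightarrow> nat \<Rightarrow> int set" where
  "stage_cone r M i = {x. stage_val r (i, x) \<in> M}"

lemma fcomp_mult_eq_power: "fcomp (\<lambda>i x. r * x) i n x = r ^ n * x"
  by (induction n) auto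

lemma stage_val_lift:
  assumes "r \<noteq> 0" "i \<le> k"
  shows "stage_val r (k, r ^ (k - i) * x) = stage_val r (i, x)"
proof -
  have "(of_int r :: rat) ^ Suc k = of_int r ^ (k - i) * of_int r ^ Suc i"
    using assms(2) by (simp flip: power_add)
  then show ?thesis
    using assms(1) by (simp add: stage_val_def)
qed

lemma stage_val_add:
  assumes "r \<noteq> 0"
  shows "stage_val r (i, x) + stage_val r (j, y)
    = stage_val r (max i j, r ^ (max i j - i) * x + r ^ (max i j - j) * y)"
  using stage_val_lift[OF assms, of i "max i j" x] stage_val_lift[OF assms, of j "max i j" y]
  by (simp add: stage_val_def add_divide_distrib)

lemma stage_val_uminus: "- stage_val r (i, x) = stage_val r (i, - x)"
  by (simp add: stage_val_def)

lemma dl_rel_mult_eq: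
  assumes "r \<noteq> 0"
  shows "dl_rel (\<lambda>i x. r * x) = {(a, b). stage_val r a = stage_val r b}"
proof (intro set_eqI iffI)
  fix z assume "z \<in> dl_rel (\<lambda>i x. r * x)"
  then obtain i x j y k where z: "z = ((i, x), (j, y))" "i \<le> k" "j \<le> k"
     "r ^ (k - i) * x = r ^ (k - j) * y"
    by (auto simp: dl_rel_def fcomp_mult_eq_power)
  then show "z \<in> {(a, b). stage_val r a = stage_val r b}"
    using stage_val_lift[OF assms, of i k x] stage_val_lift[OF assms, of j k y] by simp
next
  fix z assume "z \<in> {(a, b). stage_val r a = stage_val r b}"
  then obtain i x j y where z: "z = ((i, x), (j, y))" "stage_val r (i, x) = stage_val r (j, y)"
    by auto
  define k where "k = max i j"
  have "stage_val r (k, r ^ (k - i) * x) = stage_val r (k, r ^ (k - j) * y)"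
    using stage_val_lift[OF assms, of i k x] stage_val_lift[OF assms, of j k y] z(2)
    by (simp add: k_def)
  then have "(of_int (r ^ (k - i) * x) :: rat) = of_int (r ^ (k - j) * y)"
    using assms by (simp add: stage_val_def)
  then have "r ^ (k - i) * x = r ^ (k - j) * y"
    by (simp only: of_int_eq_iff)
  moreover have "i \<le> k" "j \<le> k"
    by (simp_all add: k_def)
  ultimately show "z \<in> dl_rel (\<lambda>i x. r * x)"
    using z(1) unfolding dl_rel_def fcomp_mult_eq_power by blast
qed

lemma order_iso_dl_stage_cone:
  assumes r: "r \<noteq> 0" and M: "M \<subseteq> range (stage_val r)"
  shows "order_iso_dl (range (stage_val r)) M (\<lambda>i x. r * x) (stage_cone r M)"
proof -
  define \<phi> where "\<phi> g = {a. stage_val r a = g}" for g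
  have eq_class: "dl_rel (\<lambda>i x. r * x) `` {a} = \<phi> (stage_val r a)" for a
    unfolding dl_rel_mult_eq[OF r] \<phi>_def by auto
  have carrier: "dl_carrier (\<lambda>i x. r * x) = \<phi> ` range (stage_val r)"
    unfolding dl_carrier_def quotient_def eq_class by auto
  have nonempty: "\<exists>a. a \<in> \<phi> g" if "g \<in> range (stage_val r)" for g
    using that unfolding \<phi>_def by auto
  have "inj_on \<phi> (range (stage_val r))"
    by (rule inj_onI) (metis (mono_tags) \<phi>_def mem_Collect_eq nonempty)
  moreover have "\<phi> (g + h) = dl_add (\<lambda>i x. r * x) (\<phi> g) (\<phi> h)"
    if "g \<in> range (stage_val r)" "h \<in> range (stage_val r)" for g h
  proof -
    obtain i x where ix: "(SOME a. a \<in> \<phi> g) = (i, x)"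
      by fastforce
    obtain j y where jy: "(SOME b. b \<in> \<phi> h) = (j, y)"
      by fastforce
    have "stage_val r (i, x) = g" "stage_val r (j, y) = h"
      using someI_ex[OF nonempty[OF that(1)]] someI_ex[OF nonempty[OF that(2)]] ix jy
      by (simp_all add: \<phi>_def)
    then have "g + h = stage_val r (max i j, r ^ (max i j - i) * x + r ^ (max i j - j) * y)"
      using stage_val_add[OF r] by blast
    then show ?thesis
      unfolding dl_add_def ix jy by (simp add: fcomp_mult_eq_power Let_def eq_class)
  qed
  moreover have "\<phi> ` M = dl_pos (\<lambda>i x. r * x) (stage_cone r M)"
  proof (intro set_eqI iffI)
    fix C assume "C \<in> \<phi> ` M"
    then obtain i x where "stage_val r (i, x) \<in> M" "C = \<phi> (stage_val r (i, x))"
      using M by auto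
    then show "C \<in> dl_pos (\<lambda>i x. r * x) (stage_cone r M)"
      using M by (auto simp: dl_pos_def carrier stage_cone_def \<phi>_def)
  qed (auto simp: dl_pos_def carrier stage_cone_def \<phi>_def)
  ultimately show ?thesis
    unfolding order_iso_dl_def bij_betw_def carrier by blast
qed

lemma add_submonoid_stage_cone:
  assumes "add_submonoid M"
  shows "add_submonoid (stage_cone r M i)"
  using assms by (simp add: add_submonoid_def stage_cone_def stage_val_def add_divide_distrib)

lemma order_embedding_stage_cone:
  assumes "r \<noteq> 0"
  shows "order_embedding (\<lambda>x. r * x) (stage_cone r M i) (stage_cone r M (Suc i))"
proof -
  have "stage_val r (Suc i, r * x) = stage_val r (i, x)" for x
    using stage_val_lift[OF assms, of i "Suc i" x] by simp
  then show ?thesis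
    using assms by (auto simp: order_embedding_def stage_cone_def inj_on_def distrib_left)
qed

lemma monoid2_left_mem: "a \<in> monoid2 a b"
  unfolding monoid2_def by (intro CollectI exI[of _ 1] exI[of _ 0]) simp

lemma monoid2_right_mem: "b \<in> monoid2 a b"
  unfolding monoid2_def by (intro CollectI exI[of _ 0] exI[of _ 1]) simp

lemma monoid2_nonneg: "0 \<le> a \<Longrightarrow> 0 \<le> b \<Longrightarrow> k \<in> monoid2 a b \<Longrightarrow> 0 \<le> k"
  by (auto simp: monoid2_def)

locale numerical_monoid_pair =
  fixes a b r s :: int
  assumes a_pos: "0 < a" and b_pos: "0 < b" and coprime_ab: "coprime a b"
    and r_pos: "0 < r" and r_less_s: "r < s" and coprime_rs: "coprime r s"
begin

definition gens :: "rat set" where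
  "gens = {of_int k / of_int r | k. k \<in> monoid2 a b} \<union>
     {of_int k' / of_int r * (of_int s / of_int r) ^ n | k' n. k' \<in> monoid2 r (s - r) \<and> n \<ge> 1}"

abbreviation M :: "rat set" where
  "M \<equiv> submonoid_gen gens"

abbreviation G :: "rat set" where
  "G \<equiv> diff_group M"

lemma gen_div_r: "k \<in> monoid2 a b \<Longrightarrow> of_int k / of_int r \<in> M"
  by (auto simp: gens_def intro: submonoid_gen.gen)

lemma gen_power:
  "k' \<in> monoid2 r (s - r) \<Longrightarrow> 1 \<le> n \<Longrightarrow> of_int k' / of_int r * (of_int s / of_int r) ^ n \<in> M"
  by (auto simp: gens_def intro!: submonoid_gen.gen)

lemma M_nonneg: "x \<in> M \<Longrightarrow> 0 \<le> x"
proof (induction rule: submonoid_gen.induct)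
  case (gen x)
  then show ?case
    using a_pos b_pos r_pos r_less_s monoid2_nonneg[of a b] monoid2_nonneg[of r "s - r"]
    by (fastforce simp: gens_def)
qed auto

lemma M_subset_range: "M \<subseteq> range (stage_val r)"
proof
  fix x assume "x \<in> M"
  then show "x \<in> range (stage_val r)"
  proof (induction rule: submonoid_gen.induct)
    case zero
    have "stage_val r (0, 0) = 0"
      by (simp add: stage_val_def)
    then show ?case
      by (metis rangeI)
  next
    case (gen x)
    have "of_int k / of_int r = stage_val r (0, k)" for k
      by (simp add: stage_val_def)
    moreover have "of_int k / of_int r * (of_int s / of_int r) ^ n = stage_val r (n, k * s ^ n)" for k n
      by (simp add: stage_val_def power_divide)
    ultimately show ?case
      using gen by (auto simp: gens_def)
  next
    case (add x y)
    then obtain i u j v where "x = stage_val r (i, u)" "y = stage_val r (j, v)"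
      by (metis rangeE surj_pair)
    then have "x + y = stage_val r (max i j, r ^ (max i j - i) * u + r ^ (max i j - j) * v)"
      using stage_val_add r_pos by simp
    then show ?case
      by (metis rangeI)
  qed
qed

lemma inverse_r_mem_G: "1 / of_int r \<in> G"
  using gen_div_r[OF monoid2_left_mem] gen_div_r[OF monoid2_right_mem] coprime_ab
  by (intro inverse_mem_diff_group add_submonoid_submonoid_gen)
    (auto intro: subset_diff_group[THEN subsetD] submonoid_gen.zero)

lemma one_mem_G: "1 \<in> G"
  using diff_group_of_int_mult[OF add_submonoid_submonoid_gen inverse_r_mem_G, of r] r_pos by simp

lemma inverse_power_mem_G: "1 / of_int r ^ n \<in> G"
proof (cases "n = 0")
  case False
  have "of_int r / of_int r * (of_int s / of_int r) ^ n \<in> M"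
    using gen_power[OF monoid2_left_mem] False by simp
  then have "of_int (s ^ n) / of_int r ^ n \<in> G"
    using r_pos by (auto simp: power_divide intro: subset_diff_group[THEN subsetD] submonoid_gen.zero)
  moreover have "of_int (r ^ n) / of_int r ^ n \<in> G"
    using one_mem_G r_pos by simp
  moreover have "coprime (s ^ n) (r ^ n)"
    using coprime_rs by (simp add: coprime_commute)
  ultimately show ?thesis
    by (rule inverse_mem_diff_group[OF add_submonoid_submonoid_gen])
qed (simp add: one_mem_G)

lemma G_eq_range: "G = range (stage_val r)"
proof
  show "G \<subseteq> range (stage_val r)"
  proof
    fix x assume "x \<in> G"
    then obtain u v where "x = u - v" "u \<in> M" "v \<in> M"
      by (auto simp: diff_group_def)
    then obtain i y j z where "x = stage_val r (i, y) - stage_val r (j, z)"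
      using M_subset_range by (metis rangeE subsetD surj_pair)
    then have "x = stage_val r (max i j, r ^ (max i j - i) * y + r ^ (max i j - j) * - z)"
      using stage_val_add[of r i y j "- z"] stage_val_uminus[of r j z] r_pos by simp
    then show "x \<in> range (stage_val r)"
      by simp
  qed
  show "range (stage_val r) \<subseteq> G"
  proof
    fix x assume "x \<in> range (stage_val r)"
    then obtain i y where "x = of_int y * (1 / of_int r ^ Suc i)"
      by (auto simp: stage_val_def)
    then show "x \<in> G"
      using diff_group_of_int_mult[OF add_submonoid_submonoid_gen inverse_power_mem_G, of y "Suc i"]
      by simp
  qed
qed

lemma add_submonoid_stage_cone_M: "add_submonoid (stage_cone r M i)"
  by (rule add_submonoid_stage_cone[OF add_submonoid_submonoid_gen])

text \<open>Stage \<open>0\<close> contains the coprime elements \<open>a\<close> and \<open>b\<close>; stage \<open>i + 1\<close> contains \<open>r\<close> times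
  stage \<open>i\<close> together with \<open>s\<^sup>i\<^sup>+\<^sup>1 (s - r)\<close>, which is coprime to \<open>r\<close>.\<close>

lemma stage_cone_eventually_mem: "\<exists>N. \<forall>x \<ge> N. x \<in> stage_cone r M i"
proof (induction i)
  case 0
  have "a \<in> stage_cone r M 0" "b \<in> stage_cone r M 0"
    using gen_div_r monoid2_left_mem monoid2_right_mem by (simp_all add: stage_cone_def stage_val_def)
  then show ?case
    using add_submonoid_eventually_mem_coprime[OF add_submonoid_stage_cone_M] a_pos b_pos coprime_ab
    by blast
next
  case (Suc i)
  then obtain N where N: "\<And>x. N \<le> x \<Longrightarrow> x \<in> stage_cone r M i"
    by blast
  have multiples: "k * r \<in> stage_cone r M (Suc i)" if "N \<le> k" for k
    using N[OF that] stage_val_lift[of r i "Suc i" k] r_pos by (simp add: stage_cone_def mult.commute)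
  moreover define c where "c = s ^ Suc i * (s - r)"
  have c_val: "stage_val r (Suc i, c) = of_int (s - r) / of_int r * (of_int s / of_int r) ^ Suc i"
    by (simp add: c_def stage_val_def power_divide)
  have c_mem: "c \<in> stage_cone r M (Suc i)"
    unfolding stage_cone_def mem_Collect_eq c_val by (rule gen_power[OF monoid2_right_mem]) simp
  have c_pos: "0 < c"
    using r_pos r_less_s by (simp add: c_def)
  have "coprime (s - r) r"
    using coprime_rs by (metis coprime_iff_gcd_eq_1 gcd.commute gcd_diff1)
  then have "coprime c r"
    using coprime_rs by (simp add: c_def coprime_commute)
  then show ?case
    using add_submonoid_eventually_mem[OF add_submonoid_stage_cone_M c_mem c_pos r_pos _ multiples]
    by blast
qed

lemma stage_cone_simple: "simple_component (stage_cone r M i)"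
proof -
  have "0 \<le> x" if "x \<in> stage_cone r M i" for x
  proof -
    have "0 \<le> of_int x / (of_int r ^ Suc i :: rat)"
      using M_nonneg that by (simp add: stage_cone_def stage_val_def)
    moreover have "0 < (of_int r ^ Suc i :: rat)"
      using r_pos by simp
    ultimately show ?thesis
      by (simp add: zero_le_divide_iff)
  qed
  then show ?thesis
    using stage_cone_eventually_mem
    by (metis add_submonoid_stage_cone_M simple_component_if_eventually_mem)
qed

end

theorem proposition2p4:
  fixes p q r s :: int
  assumes "0 < p" "0 < q" "1 < q" "q < p - q" "gcd p q = 1"
    and "s \<in> monoid2 q (p - q)" "s \<noteq> 0"
    and "0 < r" "1 < r" "r < s - r" "gcd r s = 1"
  shows "\<exists>P :: nat \<Rightarrow> int set.
     (\<forall>i. simple_component (P i)) \<and>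
     (\<forall>i. order_embedding (\<lambda>x. r * x) (P i) (P (Suc i))) \<and>
     order_iso_dl
       (diff_group (submonoid_gen
          ({of_int k / of_int r | k. k \<in> monoid2 q (p - q)} \<union>
           {of_int k' / of_int r * (of_int s / of_int r) ^ n | k' n. k' \<in> monoid2 r (s - r) \<and> n \<ge> 1})))
       (submonoid_gen
          ({of_int k / of_int r | k. k \<in> monoid2 q (p - q)} \<union>
           {of_int k' / of_int r * (of_int s / of_int r) ^ n | k' n. k' \<in> monoid2 r (s - r) \<and> n \<ge> 1}))
       (\<lambda>i x. r * x) P"
proof -
  have "gcd q (p - q) = 1"
    using \<open>gcd p q = 1\<close> by (metis gcd.commute gcd_diff1)
  then interpret numerical_monoid_pair q "p - q" r s
    using assms by unfold_locales (auto simp: coprime_iff_gcd_eq_1)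
  have "\<forall>i. simple_component (stage_cone r M i)"
    using stage_cone_simple by blast
  moreover have "\<forall>i. order_embedding (\<lambda>x. r * x) (stage_cone r M i) (stage_cone r M (Suc i))"
    using order_embedding_stage_cone r_pos by simp
  moreover have "order_iso_dl G M (\<lambda>i x. r * x) (stage_cone r M)"
    using order_iso_dl_stage_cone[OF _ M_subset_range] r_pos by (simp add: G_eq_range)
  ultimately show ?thesis
    unfolding gens_def by blast
qed

end
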